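(* Let $H$ be a real Hilbert space, $\mathcal{I}$ a finite index set, $J,g_i:H\to\mathbb{R}$ ($i\in\mathcal{I}$) $\mathcal{C}^1$ functions, $\Omega=\{u\in H: g_i(u)\le 0\ \forall i\in\mathcal{I}\}$, and assume that for every $u\in\Omega$ with $I_A(u)\ne\emptyset$ the vectors $\{g_i'(u): i\in I_A(u)\}$ are linearly independent. Suppose $u\in\Omega$ is not a KKT point of the problem of minimizing $J$ over $\Omega$, and let $u(t)=u+t\,d_W(u)+\sum_{i\in I_W(u)}c_i(t)g_i'(u)$, where the functions $c_i$ ($i\in I_W(u)$), defined for small $t>0$, are such that $u(t)\in\Omega$, $g_i(u(t))=0$ for all $i\in I_W(u)$, $c_i(t)=o(t)$ for all $i\in I_W(u)$, and $\|\sum_{i\in I_W(u)}c_i(t)g_i'(u)\|=o(t)$ as $t\to0^+$. Then there exists $t_0>0$ depending on $u$ such that $$J(u(t))-J(u)<-\frac{t}{2}\|d_W(u)\|^2\quad\text{for all } 0<t<t_0.$$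
   Context: $J'(u)$, $g_i'(u)$ denote gradients in $H$; $\mathbb{P}_C$ is the metric projection onto a closed convex set $C$. For $u\in\Omega$: $I_A(u)=\{i\in\mathcal{I}: g_i(u)=0\}$; $C_A(u)=\{\sum_{i\in I_A(u)}a_ig_i'(u): a_i\ge0\}$ ($=\{0\}$ if empty); $d_A(u)=-J'(u)-\mathbb{P}_{C_A(u)}(-J'(u))$; $I_W(u)=\{i\in I_A(u): \langle g_i'(u), d_A(u)\rangle=0\}$; $C_W(u)=\{\sum_{i\in I_W(u)}a_ig_i'(u): a_i\ge 0\}$ ($=\{0\}$ if empty); $d_W(u)=-J'(u)-\mathbb{P}_{C_W(u)}(-J'(u))$. A point $u\in\Omega$ is a KKT point if there exist $\mu_i\ge0$ with $-J'(u)=\sum_{i\in\mathcal{I}}\mu_i g_i'(u)$ and $\mu_i g_i(u)=0$ for all $i$. (Such functions $c_i$ exist for non-KKT $u$.) *)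

theory Defs
  imports "HOL-Analysis.Analysis"
begin

definition metric_proj :: "'a::real_inner set \<Rightarrow> 'a \<Rightarrow> 'a" where
  "metric_proj C x = (THE p. p \<in> C \<and> (\<forall>y\<in>C. dist x p \<le> dist x y))"

definition gen_cone :: "'i set \<Rightarrow> ('i \<Rightarrow> 'a::real_vector) \<Rightarrow> 'a set" where
  "gen_cone K v = {(\<Sum>i\<in>K. a i *\<^sub>R v i) | a. \<forall>i\<in>K. a i \<ge> 0}"

definition feasible_set :: "'i set \<Rightarrow> ('i \<Rightarrow> 'a \<Rightarrow> real) \<Rightarrow> 'a set" where
  "feasible_set I g = {u. \<forall>i\<in>I. g i u \<le> 0}"

definition active_set :: "'i set \<Rightarrow> ('i \<Rightarrow> 'a \<Rightarrow> real) \<Rightarrow> 'a \<Rightarrow> 'i set" where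
  "active_set I g u = {i\<in>I. g i u = 0}"

text \<open>d_A(u); dJ is the gradient of J, dg i the gradient of g i.\<close>
definition dir_A :: "'i set \<Rightarrow> ('a::real_inner \<Rightarrow> 'a) \<Rightarrow> ('i \<Rightarrow> 'a \<Rightarrow> real) \<Rightarrow> ('i \<Rightarrow> 'a \<Rightarrow> 'a) \<Rightarrow> 'a \<Rightarrow> 'a" where
  "dir_A I dJ g dg u =
     - dJ u - metric_proj (gen_cone (active_set I g u) (\<lambda>i. dg i u)) (- dJ u)"

definition weak_active_set :: "'i set \<Rightarrow> ('a::real_inner \<Rightarrow> 'a) \<Rightarrow> ('i \<Rightarrow> 'a \<Rightarrow> real) \<Rightarrow> ('i \<Rightarrow> 'a \<Rightarrow> 'a) \<Rightarrow> 'a \<Rightarrow> 'i set" where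
  "weak_active_set I dJ g dg u =
     {i \<in> active_set I g u. inner (dg i u) (dir_A I dJ g dg u) = 0}"

definition dir_W :: "'i set \<Rightarrow> ('a::real_inner \<Rightarrow> 'a) \<Rightarrow> ('i \<Rightarrow> 'a \<Rightarrow> real) \<Rightarrow> ('i \<Rightarrow> 'a \<Rightarrow> 'a) \<Rightarrow> 'a \<Rightarrow> 'a" where
  "dir_W I dJ g dg u =
     - dJ u - metric_proj (gen_cone (weak_active_set I dJ g dg u) (\<lambda>i. dg i u)) (- dJ u)"

definition is_KKT :: "'i set \<Rightarrow> ('a::real_inner \<Rightarrow> 'a) \<Rightarrow> ('i \<Rightarrow> 'a \<Rightarrow> real) \<Rightarrow> ('i \<Rightarrow> 'a \<Rightarrow> 'a) \<Rightarrow> 'a \<Rightarrow> bool" where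
  "is_KKT I dJ g dg u \<longleftrightarrow> u \<in> feasible_set I g \<and>
     (\<exists>\<mu>. (\<forall>i\<in>I. \<mu> i \<ge> 0 \<and> \<mu> i * g i u = 0) \<and> - dJ u = (\<Sum>i\<in>I. \<mu> i *\<^sub>R dg i u))"

end

theory Submission
  imports Defs
begin

(* Write x = -J'(u) and C = C_W(u), a convex cone that is closed because LICQ makes its
   generators linearly independent; then d_W(u) = x - P_C x. Projecting onto a cone makes
   x - P_C x orthogonal to P_C x, hence <J'(u), d_W(u)> = -|d_W(u)|^2, and d_W(u) <> 0 since
   otherwise -J'(u) lies in C_W(u) and its cone coefficients are KKT multipliers. Along
   u(t) = u + t d_W(u) + o(t) the first-order expansion of J at u then gives
   J(u(t)) - J(u) = -t |d_W(u)|^2 + o(t). *)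

section \<open>Nearest points in Hilbert spaces\<close>

lemma norm_diff_sq_midpoint:
  fixes a x y :: "'a::real_inner"
  shows "(norm (x - y))\<^sup>2 = 2 * (dist a x)\<^sup>2 + 2 * (dist a y)\<^sup>2 - 4 * (dist a (midpoint x y))\<^sup>2"
  unfolding dist_norm midpoint_def power2_norm_eq_inner
  by (simp add: inner_commute algebra_simps)

(* The library's closest_point needs heine_borel; in a Hilbert space a minimizing sequence
   is Cauchy by the parallelogram law. *)
lemma closed_convex_nearest_point_exists:
  fixes S :: "'a::{real_inner,complete_space} set"
  assumes "closed S" "convex S" "S \<noteq> {}"
  obtains p where "p \<in> S" "\<forall>y\<in>S. dist a p \<le> dist a y"
proof -
  define \<delta> where "\<delta> = infdist a S"
  have \<delta>_le: "\<delta> \<le> dist a y" if "y \<in> S" for y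
    using that by (simp add: \<delta>_def infdist_le)
  have "\<exists>p\<in>S. (dist a p)\<^sup>2 < \<delta>\<^sup>2 + 1 / (real n + 1)" for n
  proof -
    have "\<delta> < sqrt (\<delta>\<^sup>2 + 1 / (real n + 1))"
      using infdist_nonneg[of a S] by (intro real_less_rsqrt) (simp add: \<delta>_def)
    then obtain p where "p \<in> S" "dist a p < sqrt (\<delta>\<^sup>2 + 1 / (real n + 1))"
      using assms(3) by (auto simp: \<delta>_def infdist_notempty cINF_less_iff)
    then have "(dist a p)\<^sup>2 < (sqrt (\<delta>\<^sup>2 + 1 / (real n + 1)))\<^sup>2"
      by (intro power_strict_mono) auto
    then show ?thesis
      using \<open>p \<in> S\<close> by (auto simp: add_pos_nonneg)
  qed
  then obtain P where P_in: "\<And>n. P n \<in> S"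
    and P_near: "\<And>n. (dist a (P n))\<^sup>2 < \<delta>\<^sup>2 + 1 / (real n + 1)"
    by metis
  have P_close: "(norm (P m - P n))\<^sup>2 \<le> 2 / (real m + 1) + 2 / (real n + 1)" for m n
  proof -
    have "midpoint (P m) (P n) \<in> S"
      using convexD[OF assms(2) P_in P_in, of "1/2" "1/2"] by (simp add: midpoint_def scaleR_add_right)
    then have "\<delta>\<^sup>2 \<le> (dist a (midpoint (P m) (P n)))\<^sup>2"
      using \<delta>_le infdist_nonneg[of a S] by (simp add: \<delta>_def power_mono)
    then show ?thesis
      using norm_diff_sq_midpoint[of "P m" "P n" a] P_near[of m] P_near[of n] by linarith
  qed
  have "Cauchy P"
  proof (rule metric_CauchyI)
    fix e :: real assume "e > 0"
    obtain N :: nat where N: "4 / e\<^sup>2 < real N"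
      using reals_Archimedean2 by blast
    have "dist (P m) (P n) < e" if "m \<ge> N" "n \<ge> N" for m n
    proof -
      have "2 / (real m + 1) + 2 / (real n + 1) \<le> 2 / (real N + 1) + 2 / (real N + 1)"
        using that by (intro add_mono divide_left_mono) auto
      also have "\<dots> = 4 / (real N + 1)"
        by simp
      also have "\<dots> < e\<^sup>2"
      proof -
        have "4 < real N * e\<^sup>2"
          using N \<open>e > 0\<close> by (simp add: pos_divide_less_eq)
        also have "\<dots> < (real N + 1) * e\<^sup>2"
          using \<open>e > 0\<close> by (simp add: distrib_right)
        finally show ?thesis
          by (simp add: pos_divide_less_eq mult.commute)
      qed
      finally have "(norm (P m - P n))\<^sup>2 < e\<^sup>2" using P_close[of m n] by linarith
      then show ?thesis using \<open>e > 0\<close> by (simp add: dist_norm power_less_imp_less_base)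
    qed
    then show "\<exists>N. \<forall>m\<ge>N. \<forall>n\<ge>N. dist (P m) (P n) < e" by blast
  qed
  then obtain p where "P \<longlonglongrightarrow> p"
    using Cauchy_convergent_iff convergent_def by blast
  have "p \<in> S"
    using \<open>P \<longlonglongrightarrow> p\<close> P_in assms(1) closed_sequential_limits by blast
  have "(\<lambda>n. (dist a (P n))\<^sup>2) \<longlonglongrightarrow> (dist a p)\<^sup>2"
    by (intro tendsto_intros \<open>P \<longlonglongrightarrow> p\<close>)
  moreover have "(\<lambda>n. \<delta>\<^sup>2 + 1 / (real n + 1)) \<longlonglongrightarrow> \<delta>\<^sup>2"
    using LIMSEQ_inverse_real_of_nat_add[of "\<delta>\<^sup>2"] by (simp add: inverse_eq_divide add.commute)
  ultimately have "(dist a p)\<^sup>2 \<le> \<delta>\<^sup>2"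
    by (rule LIMSEQ_le) (use P_near less_imp_le in blast)
  then have "dist a p \<le> \<delta>"
    by (rule power2_le_imp_le) (simp add: \<delta>_def infdist_nonneg)
  then have "\<forall>y\<in>S. dist a p \<le> dist a y"
    using \<delta>_le order_trans by blast
  with \<open>p \<in> S\<close> show ?thesis
    by (rule that)
qed

lemma metric_proj_nearest:
  fixes C :: "'a::{real_inner,complete_space} set"
  assumes "closed C" "convex C" "C \<noteq> {}"
  shows "metric_proj C x \<in> C" and "\<forall>y\<in>C. dist x (metric_proj C x) \<le> dist x y"
proof -
  obtain p where p: "p \<in> C" "\<forall>y\<in>C. dist x p \<le> dist x y"
    using closed_convex_nearest_point_exists[OF assms] by metis
  have "metric_proj C x = p"
    unfolding metric_proj_def
    using p any_closest_point_unique[OF assms(2,1)] by (intro the_equality) auto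
  then show "metric_proj C x \<in> C" "\<forall>y\<in>C. dist x (metric_proj C x) \<le> dist x y"
    using p by auto
qed

lemma metric_proj_convex_cone:
  fixes C :: "'a::{real_inner,complete_space} set"
  assumes "closed C" "convex_cone C"
  shows "metric_proj C x \<in> C" and "inner (x - metric_proj C x) (metric_proj C x) = 0"
proof -
  let ?p = "metric_proj C x"
  have "convex C" "C \<noteq> {}"
    using assms(2) by (auto simp: convex_cone_def)
  note nearest = metric_proj_nearest[OF assms(1) this]
  show "?p \<in> C" by (rule nearest(1))
  have "0 \<in> C" "2 *\<^sub>R ?p \<in> C"
    using assms(2) nearest(1) by (auto simp: convex_cone_iff)
  then have "inner (x - ?p) (0 - ?p) \<le> 0" "inner (x - ?p) (2 *\<^sub>R ?p - ?p) \<le> 0"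
    using any_closest_point_dot[OF \<open>convex C\<close> assms(1) nearest(1) _ nearest(2)] by blast+
  then show "inner (x - ?p) ?p = 0"
    by (simp add: scaleR_2 inner_diff_right)
qed

section \<open>Closed finitely generated cones\<close>

lemma abs_scaleR_infdist_le_norm:
  fixes W :: "'a::real_normed_vector set"
  assumes "subspace W" "s \<in> W"
  shows "\<bar>t\<bar> * infdist v W \<le> norm (s + t *\<^sub>R v)"
proof (cases "t = 0")
  case False
  have "- ((1 / t) *\<^sub>R s) \<in> W"
    using assms by (simp add: subspace_neg subspace_scale)
  then have "infdist v W \<le> norm ((1 / t) *\<^sub>R s + v)"
    using infdist_le by (fastforce simp: dist_norm add.commute)
  then have "\<bar>t\<bar> * infdist v W \<le> \<bar>t\<bar> * norm ((1 / t) *\<^sub>R s + v)"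
    by (simp add: mult_left_mono)
  also have "\<dots> = norm (s + t *\<^sub>R v)"
    using False by (simp add: scaleR_add_right flip: norm_scaleR)
  finally show ?thesis .
qed simp

lemma closed_sums_scaleR_outside_subspace:
  fixes W S :: "'a::real_normed_vector set" and T :: "real set"
  assumes "closed W" "subspace W" "v \<notin> W" "closed S" "S \<subseteq> W" "closed T"
  shows "closed {s + t *\<^sub>R v | s t. s \<in> S \<and> t \<in> T}"
  unfolding closed_sequential_limits
proof (intro allI impI, elim conjE)
  fix x l
  assume "\<forall>n. x n \<in> {s + t *\<^sub>R v | s t. s \<in> S \<and> t \<in> T}" and "x \<longlonglongrightarrow> l"
  then obtain s t where x: "\<And>n. x n = s n + t n *\<^sub>R v" and s_in: "\<And>n. s n \<in> S"
    and t_in: "\<And>n. t n \<in> T"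
    by (simp only: mem_Collect_eq) metis
  define \<delta> where "\<delta> = infdist v W"
  have "\<delta> \<noteq> 0"
    using in_closed_iff_infdist_zero[OF assms(1)] assms(2,3) subspace_0 unfolding \<delta>_def by blast
  then have "\<delta> > 0"
    using infdist_nonneg[of v W] by (simp add: \<delta>_def less_le)
  \<comment> \<open>the distance of v from W controls the coefficients t n\<close>
  have "Cauchy t"
  proof (rule metric_CauchyI)
    fix e :: real assume "e > 0"
    then obtain N where N: "\<And>m n. m \<ge> N \<Longrightarrow> n \<ge> N \<Longrightarrow> dist (x m) (x n) < e * \<delta>"
      using \<open>x \<longlonglongrightarrow> l\<close>[THEN LIMSEQ_imp_Cauchy] \<open>\<delta> > 0\<close> unfolding Cauchy_def
      by (meson mult_pos_pos)
    have "dist (t m) (t n) < e" if "m \<ge> N" "n \<ge> N" for m n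
    proof -
      have "s m - s n \<in> W"
        using s_in assms(2,5) by (meson subsetD subspace_diff)
      then have "\<bar>t m - t n\<bar> * \<delta> \<le> norm ((s m - s n) + (t m - t n) *\<^sub>R v)"
        unfolding \<delta>_def by (rule abs_scaleR_infdist_le_norm[OF assms(2)])
      also have "\<dots> = dist (x m) (x n)"
        by (simp add: x dist_norm algebra_simps)
      also have "\<dots> < e * \<delta>"
        using N that by blast
      finally show ?thesis
        using \<open>\<delta> > 0\<close> by (simp add: dist_real_def)
    qed
    then show "\<exists>N. \<forall>m\<ge>N. \<forall>n\<ge>N. dist (t m) (t n) < e" by blast
  qed
  then obtain t0 where "t \<longlonglongrightarrow> t0"
    using Cauchy_convergent_iff convergent_def by blast
  have "t0 \<in> T"
    using assms(6) \<open>t \<longlonglongrightarrow> t0\<close> t_in closed_sequential_limits by blast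
  have "(\<lambda>n. x n - t n *\<^sub>R v) \<longlonglongrightarrow> l - t0 *\<^sub>R v"
    by (intro tendsto_intros \<open>x \<longlonglongrightarrow> l\<close> \<open>t \<longlonglongrightarrow> t0\<close>)
  then have "s \<longlonglongrightarrow> l - t0 *\<^sub>R v"
    by (simp add: x)
  then have "l - t0 *\<^sub>R v \<in> S"
    using assms(4) s_in closed_sequential_limits by blast
  then show "l \<in> {s + t *\<^sub>R v | s t. s \<in> S \<and> t \<in> T}"
    using \<open>t0 \<in> T\<close> by force
qed

lemma span_insert_eq_sums: "span (insert v B) = {s + t *\<^sub>R v | s t. s \<in> span B \<and> t \<in> UNIV}"
  by (auto simp: span_insert) (metis diff_add_cancel, metis add_diff_cancel)

lemma closed_span_finite:
  fixes B :: "'a::real_normed_vector set"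
  assumes "finite B"
  shows "closed (span B)"
  using assms
proof (induction B rule: finite_induct)
  case (insert v B)
  show ?case
  proof (cases "v \<in> span B")
    case False
    then show ?thesis
      unfolding span_insert_eq_sums
      using insert.IH by (intro closed_sums_scaleR_outside_subspace) auto
  qed (simp add: insert.IH span_redundant)
qed simp

lemma gen_cone_empty [simp]: "gen_cone {} v = {0}"
  by (simp add: gen_cone_def)

lemma convex_cone_gen_cone: "convex_cone (gen_cone K v)"
  unfolding convex_cone_iff
proof (intro conjI ballI allI impI)
  show "0 \<in> gen_cone K v"
    unfolding gen_cone_def by (rule CollectI, rule exI[of _ "\<lambda>i. 0"]) simp
next
  fix x y assume "x \<in> gen_cone K v" "y \<in> gen_cone K v"
  then obtain a b where "x = (\<Sum>i\<in>K. a i *\<^sub>R v i)" "\<forall>i\<in>K. a i \<ge> 0"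
    and "y = (\<Sum>i\<in>K. b i *\<^sub>R v i)" "\<forall>i\<in>K. b i \<ge> 0"
    unfolding gen_cone_def by blast
  then show "x + y \<in> gen_cone K v"
    unfolding gen_cone_def
    by (intro CollectI exI[of _ "\<lambda>i. a i + b i"]) (simp add: scaleR_add_left sum.distrib)
next
  fix x and r :: real assume "x \<in> gen_cone K v" "r \<ge> 0"
  then obtain a where "x = (\<Sum>i\<in>K. a i *\<^sub>R v i)" "\<forall>i\<in>K. a i \<ge> 0"
    unfolding gen_cone_def by blast
  then show "r *\<^sub>R x \<in> gen_cone K v"
    unfolding gen_cone_def using \<open>r \<ge> 0\<close>
    by (intro CollectI exI[of _ "\<lambda>i. r * a i"]) (simp add: scaleR_sum_right)
qed

lemma gen_cone_subset_span: "gen_cone K v \<subseteq> span (v ` K)"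
  unfolding gen_cone_def by clarify (rule span_sum, rule span_scale, rule span_base, simp)

lemma gen_cone_insert:
  assumes "finite K" "k \<notin> K"
  shows "gen_cone (insert k K) v = {s + t *\<^sub>R v k | s t. s \<in> gen_cone K v \<and> t \<in> {0..}}"
proof (intro set_eqI iffI)
  fix x assume "x \<in> gen_cone (insert k K) v"
  then obtain a where x: "x = (\<Sum>i\<in>insert k K. a i *\<^sub>R v i)"
    and a: "\<forall>i\<in>insert k K. a i \<ge> 0"
    unfolding gen_cone_def by blast
  then have "x = (\<Sum>i\<in>K. a i *\<^sub>R v i) + a k *\<^sub>R v k"
    using assms by (simp add: add.commute)
  moreover have "(\<Sum>i\<in>K. a i *\<^sub>R v i) \<in> gen_cone K v"
    using a unfolding gen_cone_def by auto
  ultimately show "x \<in> {s + t *\<^sub>R v k | s t. s \<in> gen_cone K v \<and> t \<in> {0..}}"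
    using a by auto
next
  fix x assume "x \<in> {s + t *\<^sub>R v k | s t. s \<in> gen_cone K v \<and> t \<in> {0..}}"
  then obtain a t where x: "x = (\<Sum>i\<in>K. a i *\<^sub>R v i) + t *\<^sub>R v k"
    and "\<forall>i\<in>K. a i \<ge> 0" "t \<ge> 0"
    unfolding gen_cone_def by auto
  moreover have "(\<Sum>i\<in>K. (a(k := t)) i *\<^sub>R v i) = (\<Sum>i\<in>K. a i *\<^sub>R v i)"
    using assms(2) by (intro sum.cong) auto
  ultimately have "x = (\<Sum>i\<in>insert k K. (a(k := t)) i *\<^sub>R v i)"
    and "\<forall>i\<in>insert k K. (a(k := t)) i \<ge> 0"
    using assms by (simp_all add: add.commute)
  then show "x \<in> gen_cone (insert k K) v"
    unfolding gen_cone_def by blast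
qed

lemma closed_gen_cone:
  fixes v :: "'i \<Rightarrow> 'a::real_normed_vector"
  assumes "finite K" "inj_on v K" "independent (v ` K)"
  shows "closed (gen_cone K v)"
  using assms
proof (induction K rule: finite_induct)
  case (insert k K)
  have "independent (v ` K)"
    using insert.prems(2) by (rule independent_mono) auto
  moreover have "v k \<notin> span (v ` K)"
    using insert.prems insert.hyps by (auto simp: independent_insert)
  ultimately show ?case
    unfolding gen_cone_insert[OF insert.hyps]
    using insert.IH insert.prems(1) insert.hyps(1)
    by (intro closed_sums_scaleR_outside_subspace[where W = "span (v ` K)"]
        closed_span_finite gen_cone_subset_span) auto
qed simp

section \<open>The descent direction d_W\<close>

lemma is_KKT_if_in_active_cone:
  assumes "finite I" "u \<in> feasible_set I g" "K \<subseteq> active_set I g u"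
    and "- dJ u \<in> gen_cone K (\<lambda>i. dg i u)"
  shows "is_KKT I dJ g dg u"
proof -
  obtain a where a: "- dJ u = (\<Sum>i\<in>K. a i *\<^sub>R dg i u)" "\<forall>i\<in>K. a i \<ge> 0"
    using assms(4) unfolding gen_cone_def by blast
  define \<mu> where "\<mu> i = (if i \<in> K then a i else 0)" for i
  have "K \<subseteq> I"
    using assms(3) by (auto simp: active_set_def)
  have "(\<Sum>i\<in>I. \<mu> i *\<^sub>R dg i u) = (\<Sum>i\<in>K. a i *\<^sub>R dg i u)"
    using \<open>K \<subseteq> I\<close> assms(1) by (intro sum.mono_neutral_cong_right) (auto simp: \<mu>_def)
  moreover have "\<forall>i\<in>I. \<mu> i \<ge> 0 \<and> \<mu> i * g i u = 0"
    using a(2) assms(3) by (auto simp: \<mu>_def active_set_def)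
  ultimately show ?thesis
    using a(1) assms(2) unfolding is_KKT_def by metis
qed

lemma weak_active_set_subset: "weak_active_set I dJ g dg u \<subseteq> active_set I g u"
  by (auto simp: weak_active_set_def)

lemma closed_weak_active_cone:
  assumes "finite I"
    and "active_set I g u \<noteq> {} \<Longrightarrow>
           inj_on (\<lambda>i. dg i u) (active_set I g u) \<and> independent ((\<lambda>i. dg i u) ` active_set I g u)"
  shows "closed (gen_cone (weak_active_set I dJ g dg u) (\<lambda>i. dg i u))"
proof (cases "weak_active_set I dJ g dg u = {}")
  case False
  note sub = weak_active_set_subset[of I dJ g dg u]
  with False assms(2) have inj: "inj_on (\<lambda>i. dg i u) (active_set I g u)"
    and indep: "independent ((\<lambda>i. dg i u) ` active_set I g u)"
    by blast+
  have "inj_on (\<lambda>i. dg i u) (weak_active_set I dJ g dg u)"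
    using inj sub by (rule inj_on_subset)
  moreover have "independent ((\<lambda>i. dg i u) ` weak_active_set I dJ g dg u)"
    using indep image_mono[OF sub] by (rule independent_mono)
  moreover have "finite (weak_active_set I dJ g dg u)"
    by (rule finite_subset[OF sub], rule finite_subset[OF _ assms(1)]) (auto simp: active_set_def)
  ultimately show ?thesis
    by (intro closed_gen_cone)
qed simp

lemma inner_grad_dir_W:
  fixes dJ :: "'a::{real_inner,complete_space} \<Rightarrow> 'a"
  assumes "closed (gen_cone (weak_active_set I dJ g dg u) (\<lambda>i. dg i u))"
  shows "inner (dJ u) (dir_W I dJ g dg u) = - (norm (dir_W I dJ g dg u))\<^sup>2"
proof -
  let ?p = "metric_proj (gen_cone (weak_active_set I dJ g dg u) (\<lambda>i. dg i u)) (- dJ u)"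
  have d: "dir_W I dJ g dg u = - dJ u - ?p"
    by (simp add: dir_W_def)
  have "inner (- dJ u - ?p) ?p = 0"
    using metric_proj_convex_cone(2)[OF assms convex_cone_gen_cone] .
  then show ?thesis
    unfolding d power2_norm_eq_inner by (simp add: inner_diff_left inner_diff_right inner_commute)
qed

lemma dir_W_nonzero:
  fixes dJ :: "'a::{real_inner,complete_space} \<Rightarrow> 'a"
  assumes "finite I" "u \<in> feasible_set I g" "\<not> is_KKT I dJ g dg u"
    and "closed (gen_cone (weak_active_set I dJ g dg u) (\<lambda>i. dg i u))"
  shows "dir_W I dJ g dg u \<noteq> 0"
proof
  assume "dir_W I dJ g dg u = 0"
  then have "- dJ u \<in> gen_cone (weak_active_set I dJ g dg u) (\<lambda>i. dg i u)"
    using metric_proj_convex_cone(1)[OF assms(4) convex_cone_gen_cone, of "- dJ u"]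
    by (simp add: dir_W_def)
  then have "is_KKT I dJ g dg u"
    by (rule is_KKT_if_in_active_cone[OF assms(1,2) weak_active_set_subset])
  with assms(3) show False ..
qed

section \<open>First-order descent\<close>

lemma eventually_descent_along_curve:
  fixes J :: "'a::real_inner \<Rightarrow> real" and w :: "real \<Rightarrow> 'a"
  assumes J': "(J has_derivative (\<lambda>h. inner G h)) (at u)"
    and slope: "inner G d < - a"
    and w_small: "(\<lambda>t. norm (w t)) \<in> o[at_right 0](\<lambda>t. t)"
  shows "\<forall>\<^sub>F t in at_right 0. J (u + t *\<^sub>R d + w t) - J u < - t * a"
proof -
  define \<epsilon> where "\<epsilon> = (- a - inner G d) / 3"
  have "\<epsilon> > 0"
    using slope by (simp add: \<epsilon>_def)
  then have "\<epsilon> / (norm d + 1) > 0"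
    by (simp add: add_nonneg_pos)
  then obtain r where "r > 0" and r: "\<And>z. norm (z - u) < r \<Longrightarrow>
      norm (J z - J u - inner G (z - u)) \<le> \<epsilon> / (norm d + 1) * norm (z - u)"
    using J' unfolding has_derivative_at_alt by blast
  have w_le: "\<forall>\<^sub>F t in at_right 0. norm (w t) \<le> c * t" if "c > 0" for c
    using landau_o.smallD[OF w_small that] eventually_at_right_less[of 0]
    by eventually_elim simp
  have "r / (norm d + 1) > 0"
    using \<open>r > 0\<close> by (simp add: add_nonneg_pos)
  then have "\<forall>\<^sub>F t in at_right 0. t < r / (norm d + 1)"
    unfolding eventually_at_right_field by blast
  moreover have "\<forall>\<^sub>F t in at_right 0. norm (w t) \<le> 1 * t"
    by (rule w_le) simp
  moreover have "\<forall>\<^sub>F t in at_right 0. norm (w t) \<le> \<epsilon> / (norm G + 1) * t"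
    using \<open>\<epsilon> > 0\<close> by (intro w_le) (simp add: add_nonneg_pos)
  moreover have "\<forall>\<^sub>F t in at_right (0::real). 0 < t"
    by (rule eventually_at_right_less)
  ultimately show ?thesis
  proof eventually_elim
    case (elim t)
    define h where "h = t *\<^sub>R d + w t"
    have "norm h \<le> t * (norm d + 1)"
      using elim norm_triangle_ineq[of "t *\<^sub>R d" "w t"] by (simp add: h_def algebra_simps)
    also have "\<dots> < r"
      using elim by (simp add: pos_less_divide_eq add_nonneg_pos)
    finally have "J (u + h) - J u \<le> inner G h + \<epsilon> / (norm d + 1) * norm h"
      using r[of "u + h"] by (simp add: abs_le_iff)
    also have "\<epsilon> / (norm d + 1) * norm h \<le> \<epsilon> * t"
      using \<open>norm h \<le> t * (norm d + 1)\<close> \<open>\<epsilon> > 0\<close>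
      by (simp add: divide_le_eq add_nonneg_pos mult.commute mult.left_commute)
    also have "inner G h \<le> t * inner G d + norm G * (\<epsilon> / (norm G + 1) * t)"
      using norm_cauchy_schwarz[of G "w t"] mult_left_mono[OF elim(3) norm_ge_zero[of G]]
      by (simp add: h_def inner_add_right)
    also have "norm G * (\<epsilon> / (norm G + 1) * t) = \<epsilon> * t * (norm G / (norm G + 1))"
      by simp
    also have "\<dots> \<le> \<epsilon> * t"
      using \<open>\<epsilon> > 0\<close> elim(4) by (intro mult_left_le) (auto simp: divide_le_eq_1 add_nonneg_pos)
    finally have "J (u + h) - J u \<le> t * inner G d + \<epsilon> * t + \<epsilon> * t"
      by linarith
    moreover have "t * inner G d < t * (- a)"
      using slope elim(4) by (rule mult_strict_left_mono)
    ultimately have "J (u + h) - J u < - t * a"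
      by (simp add: \<epsilon>_def algebra_simps)
    then show ?case
      by (simp add: h_def add.assoc)
  qed
qed

theorem lemma5:
  fixes I :: "'i set"
    and J :: "'a::{real_inner,complete_space} \<Rightarrow> real" and dJ :: "'a \<Rightarrow> 'a"
    and g :: "'i \<Rightarrow> 'a \<Rightarrow> real" and dg :: "'i \<Rightarrow> 'a \<Rightarrow> 'a"
    and c :: "'i \<Rightarrow> real \<Rightarrow> real" and u :: 'a
  assumes finI: "finite I"
    and J_grad: "\<And>v. (J has_derivative (\<lambda>h. inner (dJ v) h)) (at v)"
    and J_C1: "continuous_on UNIV dJ"
    and g_grad: "\<And>i v. i \<in> I \<Longrightarrow> (g i has_derivative (\<lambda>h. inner (dg i v) h)) (at v)"
    and g_C1: "\<And>i. i \<in> I \<Longrightarrow> continuous_on UNIV (dg i)"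
    and LICQ: "\<And>v. v \<in> feasible_set I g \<Longrightarrow> active_set I g v \<noteq> {} \<Longrightarrow>
                 inj_on (\<lambda>i. dg i v) (active_set I g v) \<and>
                 independent ((\<lambda>i. dg i v) ` active_set I g v)"
    and u_feas: "u \<in> feasible_set I g"
    and not_KKT: "\<not> is_KKT I dJ g dg u"
    and c_feas: "\<forall>\<^sub>F t in at_right 0.
        u + t *\<^sub>R dir_W I dJ g dg u + (\<Sum>i\<in>weak_active_set I dJ g dg u. c i t *\<^sub>R dg i u)
          \<in> feasible_set I g"
    and c_active: "\<forall>\<^sub>F t in at_right 0. \<forall>i\<in>weak_active_set I dJ g dg u.
        g i (u + t *\<^sub>R dir_W I dJ g dg u + (\<Sum>j\<in>weak_active_set I dJ g dg u. c j t *\<^sub>R dg j u)) = 0"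
    and c_small: "\<And>i. i \<in> weak_active_set I dJ g dg u \<Longrightarrow> c i \<in> o[at_right 0](\<lambda>t. t)"
    and c_sum_small: "(\<lambda>t. norm (\<Sum>i\<in>weak_active_set I dJ g dg u. c i t *\<^sub>R dg i u))
                        \<in> o[at_right 0](\<lambda>t. t)"
  shows "\<exists>t0>0. \<forall>t. 0 < t \<and> t < t0 \<longrightarrow>
           J (u + t *\<^sub>R dir_W I dJ g dg u + (\<Sum>i\<in>weak_active_set I dJ g dg u. c i t *\<^sub>R dg i u)) - J u
             < - (t / 2) * (norm (dir_W I dJ g dg u))\<^sup>2"
proof -
  let ?K = "weak_active_set I dJ g dg u" and ?d = "dir_W I dJ g dg u"
  have closed: "closed (gen_cone ?K (\<lambda>i. dg i u))"
    using finI LICQ[OF u_feas] by (rule closed_weak_active_cone)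
  have "inner (dJ u) ?d < - ((norm ?d)\<^sup>2 / 2)"
    using inner_grad_dir_W[OF closed] dir_W_nonzero[OF finI u_feas not_KKT closed] by simp
  \<comment> \<open>only differentiability of J at u and c_sum_small enter the estimate\<close>
  from eventually_descent_along_curve[OF J_grad this c_sum_small]
  obtain t0 where "t0 > 0" and descent: "\<And>t. 0 < t \<Longrightarrow> t < t0 \<Longrightarrow>
      J (u + t *\<^sub>R ?d + (\<Sum>i\<in>?K. c i t *\<^sub>R dg i u)) - J u < - t * ((norm ?d)\<^sup>2 / 2)"
    unfolding eventually_at_right_field by auto
  show ?thesis
    using \<open>t0 > 0\<close> descent by (intro exI[of _ t0]) simp
qed

end
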